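(* No axis rule (defined for profiles over every finite candidate set) satisfies both heredity and consistency with linearity.
   Context: Candidates come from a fixed infinite universe. An approval ballot is a nonempty subset $A\subseteq C$; a profile over $C$ is a finite sequence of ballots. An axis is a strict linear order $\triangleleft$ on $C$. A ballot $A$ is an interval of $\triangleleft$ if for all $a,b\in A$ and every $c$ with $a\triangleleft c\triangleleft b$ we have $c\in A$. A profile is linear if some axis makes all its ballots intervals; $\mathrm{con}(P)$ is the set of such axes. An axis rule maps each profile $P$ over $C$ to a nonempty set $f(P)$ of axes on $C$ closed under reversal. It is consistent with linearity if $f(P)=\mathrm{con}(P)$ for every linear profile $P$. For $C'\subseteq C$, $P_{C'}$ is the profile over $C'$ obtained by intersecting each ballot with $C'$ (ballots becoming empty are discarded), and $\triangleleft_{C'}$ is the restriction of $\triangleleft$ to $C'$. $f$ satisfies heredity if for every profile $P$ over $C$, every $C'\subseteq C$ and every $\triangleleft\in f(P)$, we have $\triangleleft_{C'}\in f(P_{C'})$. *)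

theory Defs
  imports Main
begin

definition ballot_over :: "'c set \<Rightarrow> 'c set \<Rightarrow> bool" where
  "ballot_over C A \<longleftrightarrow> A \<noteq> {} \<and> A \<subseteq> C"

definition profile_over :: "'c set \<Rightarrow> 'c set list \<Rightarrow> bool" where
  "profile_over C P \<longleftrightarrow> (\<forall>A\<in>set P. ballot_over C A)"

definition axis :: "'c set \<Rightarrow> ('c \<times> 'c) set \<Rightarrow> bool" where
  "axis C r \<longleftrightarrow> strict_linear_order_on C r \<and> r \<subseteq> C \<times> C"

definition is_interval :: "('c \<times> 'c) set \<Rightarrow> 'c set \<Rightarrow> bool" where
  "is_interval r A \<longleftrightarrow> (\<forall>a\<in>A. \<forall>b\<in>A. \<forall>c. (a, c) \<in> r \<and> (c, b) \<in> r \<longrightarrow> c \<in> A)"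

definition con :: "'c set \<Rightarrow> 'c set list \<Rightarrow> ('c \<times> 'c) set set" where
  "con C P = {r. axis C r \<and> (\<forall>A\<in>set P. is_interval r A)}"

definition linear_profile :: "'c set \<Rightarrow> 'c set list \<Rightarrow> bool" where
  "linear_profile C P \<longleftrightarrow> con C P \<noteq> {}"

definition axis_rule :: "('c set \<Rightarrow> 'c set list \<Rightarrow> ('c \<times> 'c) set set) \<Rightarrow> bool" where
  "axis_rule f \<longleftrightarrow> (\<forall>C P. finite C \<and> profile_over C P \<longrightarrow>
      f C P \<noteq> {} \<and> (\<forall>r\<in>f C P. axis C r \<and> r\<inverse> \<in> f C P))"

definition consistent_with_linearity :: "('c set \<Rightarrow> 'c set list \<Rightarrow> ('c \<times> 'c) set set) \<Rightarrow> bool" where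
  "consistent_with_linearity f \<longleftrightarrow> (\<forall>C P. finite C \<and> profile_over C P \<and> linear_profile C P
      \<longrightarrow> f C P = con C P)"

definition restrict_profile :: "'c set \<Rightarrow> 'c set list \<Rightarrow> 'c set list" where
  "restrict_profile C' P = filter (\<lambda>A. A \<noteq> {}) (map (\<lambda>A. A \<inter> C') P)"

definition restrict_axis :: "'c set \<Rightarrow> ('c \<times> 'c) set \<Rightarrow> ('c \<times> 'c) set" where
  "restrict_axis C' r = r \<inter> (C' \<times> C')"

definition heredity :: "('c set \<Rightarrow> 'c set list \<Rightarrow> ('c \<times> 'c) set set) \<Rightarrow> bool" where
  "heredity f \<longleftrightarrow> (\<forall>C P C' r. finite C \<and> profile_over C P \<and> C' \<subseteq> C \<and> r \<in> f C P
      \<longrightarrow> restrict_axis C' r \<in> f C' (restrict_profile C' P))"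

end

theory Submission
  imports Defs
begin

text \<open>Take four candidates x, y, z, w and the cyclic profile with ballots {x,y}, {y,z}, {z,w},
  {w,x}. Deleting one candidate leaves a path profile on the other three, which is linear and
  whose consistent axes are exactly those putting the middle of the path between its ends.
  By heredity and consistency with linearity, every axis chosen for the cyclic profile therefore
  places each of the four candidates strictly between two others, which is impossible for the
  minimum of the axis.\<close>

definition between :: "('c \<times> 'c) set \<Rightarrow> 'c \<Rightarrow> 'c \<Rightarrow> 'c \<Rightarrow> bool" where
  "between r a b c \<longleftrightarrow> (a, b) \<in> r \<and> (b, c) \<in> r \<or> (c, b) \<in> r \<and> (b, a) \<in> r"

lemma set_restrict_profile: "set (restrict_profile C' P) = (\<lambda>A. A \<inter> C') ` set P - {{}}"
  by (auto simp: restrict_profile_def)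

lemma profile_over_restrict_profile: "profile_over C' (restrict_profile C' P)"
  by (auto simp: profile_over_def ballot_over_def restrict_profile_def)

lemma restrict_axis_in_con:
  assumes "heredity f" "consistent_with_linearity f"
    and "finite C" "profile_over C P" "C' \<subseteq> C" "r \<in> f C P"
    and "linear_profile C' (restrict_profile C' P)"
  shows "restrict_axis C' r \<in> con C' (restrict_profile C' P)"
proof -
  have "restrict_axis C' r \<in> f C' (restrict_profile C' P)"
    using assms(1,3-6) unfolding heredity_def by blast
  moreover have "finite C'" using assms(3,5) finite_subset by blast
  ultimately show ?thesis
    using assms(2,7) profile_over_restrict_profile
    unfolding consistent_with_linearity_def by blast
qed

lemma exists_minimal_in_strict_linear_order:
  assumes "finite A" "A \<noteq> {}" "strict_linear_order_on A r" "r \<subseteq> A \<times> A"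
  obtains m where "m \<in> A" "\<And>a. (a, m) \<notin> r"
proof -
  have "trans r" "irrefl r" using assms(3) by (auto simp: strict_linear_order_on_def)
  hence "acyclic r" by (simp add: acyclic_irrefl trancl_id)
  moreover have "finite r" using assms(1,4) finite_subset by blast
  ultimately have "wf r" using finite_acyclic_wf by blast
  then obtain m where "m \<in> A" "\<And>a. (a, m) \<in> r \<Longrightarrow> a \<notin> A"
    using assms(2) wfE_min' by blast
  with assms(4) show thesis using that by blast
qed

lemma path_profile_linear:
  assumes "distinct [a, b, c]" "set Q = {{a, b}, {b, c}, {c}, {a}}"
  shows "linear_profile {a, b, c} Q"
proof -
  have "{(a, b), (b, c), (a, c)} \<in> con {a, b, c} Q"
    using assms
    by (auto simp: con_def axis_def strict_linear_order_on_def trans_def irrefl_def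
        total_on_def is_interval_def)
  thus ?thesis unfolding linear_profile_def by blast
qed

lemma between_of_intervals:
  assumes "distinct [a, b, c]" "axis {a, b, c} q"
    and "is_interval q {a, b}" "is_interval q {b, c}"
  shows "between q a b c"
proof -
  have "trans q" "irrefl q" "total_on {a, b, c} q"
    using assms(2) by (auto simp: axis_def strict_linear_order_on_def)
  with assms(1,3,4) show ?thesis
    unfolding between_def is_interval_def trans_def irrefl_def total_on_def
    by simp metis
qed

lemma cycle_profile_between:
  assumes "heredity f" "consistent_with_linearity f"
    and "distinct [a, b, c, d]" "set P = {{a, b}, {b, c}, {c, d}, {d, a}}"
    and "r \<in> f {a, b, c, d} P" "axis {a, b, c, d} r"
  shows "between r a b c"
proof -
  let ?Q = "restrict_profile {a, b, c} P"
  have Q: "set ?Q = {{a, b}, {b, c}, {c}, {a}}"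
    using assms(3,4) unfolding set_restrict_profile by auto
  have "profile_over {a, b, c, d} P"
    using assms(4) by (auto simp: profile_over_def ballot_over_def)
  hence "restrict_axis {a, b, c} r \<in> con {a, b, c} ?Q"
    using restrict_axis_in_con[OF assms(1,2) _ _ _ assms(5)] assms(3) path_profile_linear[OF _ Q]
    by auto
  hence "between (restrict_axis {a, b, c} r) a b c"
    using assms(3) by (intro between_of_intervals) (auto simp: con_def Q)
  thus ?thesis by (auto simp: between_def restrict_axis_def)
qed

theorem mainTheorem18:
  fixes f :: "'c set \<Rightarrow> 'c set list \<Rightarrow> ('c \<times> 'c) set set"
  assumes "infinite (UNIV :: 'c set)"
    and "axis_rule f"
  shows "\<not> (heredity f \<and> consistent_with_linearity f)"
proof
  assume "heredity f \<and> consistent_with_linearity f"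
  then have "heredity f" "consistent_with_linearity f" by auto
  note between = cycle_profile_between[OF this]
  obtain S :: "'c set" where "finite S" "card S = 4"
    using assms(1) infinite_arbitrarily_large by blast
  then obtain x y z w :: 'c where d: "distinct [x, y, z, w]"
    by (auto simp: card_Suc_eq numeral_eq_Suc)
  define P where "P = [{x, y}, {y, z}, {z, w}, {w, x}]"
  have "profile_over {x, y, z, w} P" by (auto simp: P_def profile_over_def ballot_over_def)
  then obtain r where r: "r \<in> f {x, y, z, w} P" and ax: "axis {x, y, z, w} r"
    using assms(2) unfolding axis_rule_def by fastforce
  have "{y, z, w, x} = {x, y, z, w}" "{z, w, x, y} = {x, y, z, w}" "{w, x, y, z} = {x, y, z, w}"
    by auto
  moreover have "set P = {{x, y}, {y, z}, {z, w}, {w, x}}" "set P = {{y, z}, {z, w}, {w, x}, {x, y}}"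
    "set P = {{z, w}, {w, x}, {x, y}, {y, z}}" "set P = {{w, x}, {x, y}, {y, z}, {z, w}}"
    by (auto simp: P_def)
  moreover have "distinct [y, z, w, x]" "distinct [z, w, x, y]" "distinct [w, x, y, z]"
    using d by auto
  ultimately have "between r x y z" "between r y z w" "between r z w x" "between r w x y"
    using between d r ax by metis+
  moreover obtain m where "m \<in> {x, y, z, w}" "\<And>a. (a, m) \<notin> r"
    using exists_minimal_in_strict_linear_order[of "{x, y, z, w}" r] ax
    unfolding axis_def by blast
  ultimately show False by (auto simp: between_def)
qed

end
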